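(* Let $0<A,B\le1$ with $L(A,B)<R(A,B)$. Then for $U\in[L(A,B),R(A,B)]$, \[ \frac1\pi G'_{A,B}(U)=(A+B)\sin(\pi U)+B\kappa\sin(\pi M(U))+A\varepsilon\sin(\pi N(U)), \] and $G_{A,B}$ is strictly increasing on $[L(A,B),R(A,B)]$.
   Context: For $0<A,B\le1$ put $\kappa=\sqrt{1-A^2}$, $\varepsilon=\sqrt{1-B^2}$, $P=P(A,B)=\frac{1+AB}{B(A+B)}$, $M(U)=\kappa(P-U)$, $N(U)=\varepsilon\left(U+\frac{\kappa^2}{A(A+B)}\right)$, and $G_{A,B}(U)=B\cos(\pi M(U))-A\cos(\pi N(U))-(A+B)\cos(\pi U)$. Further $L(A,B)=\frac{\kappa}{1+\kappa}\frac{1+AB}{B(A+B)}$ and $R(A,B)=\frac{1-\varepsilon\kappa^2/[A(A+B)]}{1+\varepsilon}$. *)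

theory Defs
  imports "HOL-Analysis.Analysis"
begin

definition kap :: "real \<Rightarrow> real" where "kap A = sqrt (1 - A^2)"
definition eps :: "real \<Rightarrow> real" where "eps B = sqrt (1 - B^2)"
definition PP :: "real \<Rightarrow> real \<Rightarrow> real" where "PP A B = (1 + A*B) / (B*(A+B))"
definition MM :: "real \<Rightarrow> real \<Rightarrow> real \<Rightarrow> real" where
  "MM A B U = kap A * (PP A B - U)"
definition NN :: "real \<Rightarrow> real \<Rightarrow> real \<Rightarrow> real" where
  "NN A B U = eps B * (U + (kap A)^2 / (A*(A+B)))"
definition GG :: "real \<Rightarrow> real \<Rightarrow> real \<Rightarrow> real" where
  "GG A B U = B * cos (pi * MM A B U) - A * cos (pi * NN A B U) - (A+B) * cos (pi * U)"
definition LL :: "real \<Rightarrow> real \<Rightarrow> real" where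
  "LL A B = kap A / (1 + kap A) * ((1 + A*B) / (B*(A+B)))"
definition RR :: "real \<Rightarrow> real \<Rightarrow> real" where
  "RR A B = (1 - eps B * (kap A)^2 / (A*(A+B))) / (1 + eps B)"

end

theory Submission
  imports Defs
begin

text \<open>
  On \<open>[L, R]\<close> all three phases \<open>U\<close>, \<open>M(U)\<close> and \<open>N(U)\<close> lie in \<open>[0, 1]\<close>:
  \<open>U \<ge> L\<close> is equivalent to \<open>M(U) \<le> U\<close>, \<open>U \<le> R\<close> to \<open>N(U) \<le> 1 - U\<close>, and \<open>P \<ge> 1\<close>
  gives \<open>M(U) \<ge> 0\<close>. Hence every sine in the derivative is nonnegative, and
  \<open>sin (\<pi> U) > 0\<close> in the interior, so \<open>G\<close> is strictly increasing.
\<close>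

lemma strict_mono_on_if_deriv_pos:
  fixes f f' :: "real \<Rightarrow> real"
  assumes deriv: "\<And>x. x \<in> {a..b} \<Longrightarrow> (f has_real_derivative f' x) (at x)"
    and pos: "\<And>x. a < x \<Longrightarrow> x < b \<Longrightarrow> f' x > 0"
  shows "strict_mono_on {a..b} f"
proof (rule strict_mono_onI)
  fix r s assume r: "r \<in> {a..b}" and s: "s \<in> {a..b}" and "r < s"
  have "continuous_on {r..s} f"
  proof (intro continuous_at_imp_continuous_on ballI)
    fix x assume "x \<in> {r..s}"
    with r s show "isCont f x" by (intro DERIV_isCont[OF deriv]) auto
  qed
  moreover have "\<exists>y. (f has_real_derivative y) (at x) \<and> 0 < y" if "r < x" "x < s" for x
  proof -
    from that r s have "x \<in> {a..b}" "a < x" "x < b" by auto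
    then show ?thesis using deriv pos by blast
  qed
  ultimately show "f r < f s"
    by (intro DERIV_pos_imp_increasing_open[OF \<open>r < s\<close>])
qed

lemma GG_has_real_derivative:
  "(GG A B has_real_derivative
      pi * ((A+B) * sin (pi*U) + B * kap A * sin (pi * MM A B U)
            + A * eps B * sin (pi * NN A B U))) (at U)"
  unfolding GG_def MM_def NN_def
  by (rule derivative_eq_intros refl | simp)+ (simp add: algebra_simps)

lemma kap_nonneg: "\<bar>A\<bar> \<le> 1 \<Longrightarrow> kap A \<ge> 0"
  unfolding kap_def by (simp add: abs_square_le_1)

lemma eps_nonneg: "\<bar>B\<bar> \<le> 1 \<Longrightarrow> eps B \<ge> 0"
  unfolding eps_def by (simp add: abs_square_le_1)

lemma PP_ge_1:
  assumes "0 < A" "0 < B" "B \<le> 1"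
  shows "PP A B \<ge> 1"
proof -
  have "B * B \<le> 1" using assms by (simp add: mult_le_one)
  then have "B * (A+B) \<le> 1 + A*B" by (simp add: algebra_simps)
  then show ?thesis unfolding PP_def using assms by simp
qed

lemma LL_nonneg:
  assumes "0 < A" "A \<le> 1" "0 < B" "B \<le> 1"
  shows "LL A B \<ge> 0"
  using kap_nonneg[of A] PP_ge_1[of A B] assms
  unfolding LL_def PP_def[symmetric] by simp

lemma RR_le_1:
  assumes "0 < A" "0 < B" "B \<le> 1"
  shows "RR A B \<le> 1"
proof -
  have "0 \<le> eps B" "0 \<le> eps B * (kap A)^2 / (A*(A+B))"
    using eps_nonneg[of B] assms by simp_all
  then show ?thesis unfolding RR_def by simp
qed

lemma MM_le_iff_LL_le:
  assumes "\<bar>A\<bar> \<le> 1"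
  shows "MM A B U \<le> U \<longleftrightarrow> LL A B \<le> U"
  using kap_nonneg[OF assms]
  unfolding MM_def LL_def PP_def[symmetric] by (simp add: field_simps)

lemma MM_nonneg:
  assumes "\<bar>A\<bar> \<le> 1" "U \<le> PP A B"
  shows "MM A B U \<ge> 0"
  using kap_nonneg[OF assms(1)] assms(2) unfolding MM_def by simp

lemma add_NN_le_1_iff_le_RR:
  assumes "\<bar>B\<bar> \<le> 1"
  shows "U + NN A B U \<le> 1 \<longleftrightarrow> U \<le> RR A B"
  using eps_nonneg[OF assms]
  unfolding NN_def RR_def by (simp add: field_simps)

lemma NN_nonneg:
  assumes "0 < A" "0 < B" "B \<le> 1" "0 \<le> U"
  shows "NN A B U \<ge> 0"
  using eps_nonneg[of B] assms unfolding NN_def by simp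

lemma GG_deriv_pos:
  assumes "0 < A" "A \<le> 1" "0 < B" "B \<le> 1" "LL A B < U" "U < RR A B"
  shows "pi * ((A+B) * sin (pi*U) + B * kap A * sin (pi * MM A B U)
                + A * eps B * sin (pi * NN A B U)) > 0"
proof -
  have abs_le: "\<bar>A\<bar> \<le> 1" "\<bar>B\<bar> \<le> 1" using assms by auto
  have U_01: "0 < U" "U < 1"
    using assms LL_nonneg[of A B] RR_le_1[of A B] by linarith+
  have "MM A B U \<le> U"
    using MM_le_iff_LL_le[OF abs_le(1)] assms(5) by simp
  moreover have "0 \<le> MM A B U"
    using MM_nonneg[OF abs_le(1)] PP_ge_1[of A B] U_01 assms by simp
  ultimately have M_01: "0 \<le> MM A B U" "MM A B U \<le> 1"
    using U_01 by linarith+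
  have "U + NN A B U \<le> 1"
    using add_NN_le_1_iff_le_RR[OF abs_le(2)] assms(6) by simp
  moreover have "0 \<le> NN A B U"
    using NN_nonneg[of A B U] U_01 assms by simp
  ultimately have N_01: "0 \<le> NN A B U" "NN A B U \<le> 1"
    using U_01 by linarith+
  have "sin (pi*U) > 0" using U_01 by (intro sin_gt_zero) auto
  moreover have "sin (pi * MM A B U) \<ge> 0" using M_01 by (intro sin_ge_zero) auto
  moreover have "sin (pi * NN A B U) \<ge> 0" using N_01 by (intro sin_ge_zero) auto
  ultimately show ?thesis
    using kap_nonneg[OF abs_le(1)] eps_nonneg[OF abs_le(2)] assms
    by (simp add: add_pos_nonneg)
qed

theorem lemma3p3:
  fixes A B :: real
  assumes "0 < A" "A \<le> 1" "0 < B" "B \<le> 1" "LL A B < RR A B"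
  shows "(\<forall>U \<in> {LL A B..RR A B}.
           (GG A B has_real_derivative
              pi * ((A+B) * sin (pi*U) + B * kap A * sin (pi * MM A B U)
                    + A * eps B * sin (pi * NN A B U))) (at U))
         \<and> strict_mono_on {LL A B..RR A B} (GG A B)"
  using GG_has_real_derivative
    strict_mono_on_if_deriv_pos[OF GG_has_real_derivative GG_deriv_pos[OF assms(1-4)]]
  by blast

end
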